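(* Let $(X,d)$ be a metric space and $\tilde x$ a sequence of points of $X$. The following are equivalent: (i) $\tilde x$ is $d$-statistically convergent; (ii) every subsequence $\tilde x'$ of $\tilde x$ with $\liminf_{n\to\infty}\frac{|K_{\tilde x'}(n)|}{n}>0$ is $d$-statistically convergent; (iii) every dense subsequence $\tilde x'$ of $\tilde x$ is $d$-statistically convergent.
   Context: A sequence $(z_k)$ in $(X,d)$ is $d$-statistically convergent to $a\in X$ if for every $\epsilon>0$, $\lim_{n\to\infty}\frac{1}{n}|\{k\le n: d(z_k,a)\ge\epsilon\}|=0$, and $d$-statistically convergent if this holds for some $a\in X$; a subsequence $(x_{n(k)})_k$ (with $(n(k))$ infinite and strictly increasing) is regarded as the sequence $k\mapsto x_{n(k)}$. For a subsequence $\tilde x'=(x_{n(k)})$, $K_{\tilde x'}=\{n(k):k\in\mathbb N\}$ and $K_{\tilde x'}(n)=\{m\in K_{\tilde x'}:m\le n\}$. A set $K\subseteq\mathbb N$ is statistical dense if $\lim_{n\to\infty}|\{k\in K:k\le n\}|/n=1$; $\tilde x'$ is a dense subsequence of $\tilde x$ if $K_{\tilde x'}$ is a statistical dense subset of $\mathbb N$. *)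

theory Defs
  imports "HOL-Analysis.Analysis" "HOL-Library.Liminf_Limsup"
begin

text \<open>Sequences are indexed from 0; the paper's index k \<le> n (k \<ge> 1) corresponds to k < n here.\<close>

definition stat_conv_to :: "(nat \<Rightarrow> 'a::metric_space) \<Rightarrow> 'a \<Rightarrow> bool" where
  "stat_conv_to z a \<longleftrightarrow>
     (\<forall>\<epsilon>>0. (\<lambda>n. real (card {k. k < n \<and> dist (z k) a \<ge> \<epsilon>}) / real n) \<longlonglongrightarrow> 0)"

definition stat_convergent :: "(nat \<Rightarrow> 'a::metric_space) \<Rightarrow> bool" where
  "stat_convergent z \<longleftrightarrow> (\<exists>a. stat_conv_to z a)"

definition count_upto :: "nat set \<Rightarrow> nat \<Rightarrow> nat" where
  "count_upto K n = card {m \<in> K. m < n}"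

definition stat_dense :: "nat set \<Rightarrow> bool" where
  "stat_dense K \<longleftrightarrow> (\<lambda>n. real (count_upto K n) / real n) \<longlonglongrightarrow> 1"

end

theory Submission
  imports Defs
begin

text \<open>If the index set of a subsequence has positive lower density, then for some c > 0 the
  n-th chosen index r n is at most n / c. So among the first n terms of the subsequence there are
  at most as many exceptional terms (distance \<ge> \<epsilon> from the limit) as among the first r n terms of
  the whole sequence, and dividing by n instead of r n costs only the factor 1 / c. Dense index sets
  have lower density 1, and the identity is a dense subsequence, which gives the converses.\<close>

lemma count_upto_range_strict_mono:
  assumes "strict_mono r"
  shows "count_upto (range r) (r n) = n"
proof -
  have "{m \<in> range r. m < r n} = r ` {..<n}"
    using assms by (auto simp: strict_mono_less)
  moreover have "inj_on r {..<n}"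
    using assms strict_mono_imp_inj_on by blast
  ultimately show ?thesis
    unfolding count_upto_def by (simp add: card_image)
qed

lemma card_subseq_le:
  fixes r :: "nat \<Rightarrow> nat"
  assumes "strict_mono r"
  shows "card {k. k < n \<and> P (r k)} \<le> card {k. k < r n \<and> P k}"
proof -
  have "card {k. k < n \<and> P (r k)} = card (r ` {k. k < n \<and> P (r k)})"
    using strict_mono_imp_inj_on[OF assms] by (intro card_image [symmetric]) (auto intro: inj_on_subset)
  also have "\<dots> \<le> card {k. k < r n \<and> P k}"
    using assms by (intro card_mono) (auto simp: strict_mono_less)
  finally show ?thesis .
qed

lemma strict_mono_le_linear_if_liminf_pos:
  assumes r: "strict_mono r"
    and pos: "liminf (\<lambda>n. ereal (real (count_upto (range r) n) / real n)) > 0"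
  obtains c where "c > 0" "eventually (\<lambda>n. c * real (r n) \<le> real n) sequentially"
proof -
  obtain c where c: "0 < ereal c"
    "ereal c < liminf (\<lambda>n. ereal (real (count_upto (range r) n) / real n))"
    using ereal_dense2[OF pos] by blast
  then obtain N0 where N0: "\<And>N. N \<ge> N0 \<Longrightarrow> c < real (count_upto (range r) N) / real N"
    using less_LiminfD[OF c(2)] by (auto simp: eventually_sequentially)
  have "c * real (r n) \<le> real n" if "n \<ge> max N0 1" for n
  proof -
    have "r n \<ge> n" using seq_suble[OF r] by simp
    with that have "r n \<ge> N0" "real (r n) > 0" by auto
    with N0[of "r n"] show ?thesis
      by (simp add: count_upto_range_strict_mono[OF r] field_simps)
  qed
  with c(1) show ?thesis
    by (intro that) (auto simp: eventually_sequentially intro!: exI[of _ "max N0 1"])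
qed

lemma stat_conv_to_subseq:
  fixes x :: "nat \<Rightarrow> 'a::metric_space"
  assumes conv: "stat_conv_to x a" and r: "strict_mono r"
    and pos: "liminf (\<lambda>n. ereal (real (count_upto (range r) n) / real n)) > 0"
  shows "stat_conv_to (x \<circ> r) a"
  unfolding stat_conv_to_def
proof (intro allI impI)
  fix e :: real assume "e > 0"
  define E where "E N = real (card {k. k < N \<and> dist (x k) a \<ge> e})" for N
  have "(\<lambda>N. E N / real N) \<longlonglongrightarrow> 0"
    using conv \<open>e > 0\<close> unfolding stat_conv_to_def E_def by auto
  then have "(\<lambda>n. E (r n) / real (r n)) \<longlonglongrightarrow> 0"
    using LIMSEQ_subseq_LIMSEQ[OF _ r] by (simp add: o_def)
  obtain c where "c > 0" and c: "eventually (\<lambda>n. c * real (r n) \<le> real n) sequentially"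
    using strict_mono_le_linear_if_liminf_pos[OF r pos] by blast
  have bound: "real (card {k. k < n \<and> e \<le> dist ((x \<circ> r) k) a}) / real n
      \<le> 1 / c * (E (r n) / real (r n))" if "c * real (r n) \<le> real n" "n \<ge> 1" for n
  proof -
    have "real (r n) > 0" using seq_suble[OF r, of n] \<open>n \<ge> 1\<close> by simp
    have "real (card {k. k < n \<and> e \<le> dist ((x \<circ> r) k) a}) \<le> E (r n)"
      unfolding E_def using card_subseq_le[OF r, of n "\<lambda>k. e \<le> dist (x k) a"] by simp
    then have "real (card {k. k < n \<and> e \<le> dist ((x \<circ> r) k) a}) / real n \<le> E (r n) / real n"
      by (simp add: divide_right_mono)
    also have "\<dots> \<le> E (r n) / (c * real (r n))"
      using that \<open>c > 0\<close> \<open>real (r n) > 0\<close> by (intro divide_left_mono) (auto simp: E_def)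
    finally show ?thesis by simp
  qed
  show "(\<lambda>n. real (card {k. k < n \<and> e \<le> dist ((x \<circ> r) k) a}) / real n) \<longlonglongrightarrow> 0"
  proof (rule tendsto_sandwich[OF _ _ tendsto_const])
    show "(\<lambda>n. 1 / c * (E (r n) / real (r n))) \<longlonglongrightarrow> 0"
      using tendsto_mult_right_zero[OF \<open>(\<lambda>n. E (r n) / real (r n)) \<longlonglongrightarrow> 0\<close>] .
    show "eventually (\<lambda>n. real (card {k. k < n \<and> e \<le> dist ((x \<circ> r) k) a}) / real n
        \<le> 1 / c * (E (r n) / real (r n))) sequentially"
      using eventually_conj[OF c eventually_ge_at_top[of 1]] by eventually_elim (use bound in auto)
  qed simp
qed

lemma stat_dense_UNIV: "stat_dense UNIV"
  unfolding stat_dense_def count_upto_def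
  by (rule Lim_transform_eventually[OF tendsto_const]) (auto simp: eventually_sequentially intro: exI[of _ 1])

lemma liminf_count_upto_pos_if_stat_dense:
  assumes "stat_dense K"
  shows "liminf (\<lambda>n. ereal (real (count_upto K n) / real n)) > 0"
proof -
  have "(\<lambda>n. ereal (real (count_upto K n) / real n)) \<longlonglongrightarrow> ereal 1"
    using assms unfolding stat_dense_def by (rule tendsto_ereal)
  then have "liminf (\<lambda>n. ereal (real (count_upto K n) / real n)) = ereal 1"
    by (rule lim_imp_Liminf[OF trivial_limit_sequentially])
  then show ?thesis by simp
qed

lemma stat_convergent_subseq:
  assumes "stat_convergent x" "strict_mono r"
    and "liminf (\<lambda>n. ereal (real (count_upto (range r) n) / real n)) > 0"
  shows "stat_convergent (x \<circ> r)"
  using assms stat_conv_to_subseq unfolding stat_convergent_def by blast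

theorem theorem5:
  fixes x :: "nat \<Rightarrow> 'a::metric_space"
  shows "(stat_convergent x
            \<longleftrightarrow> (\<forall>r. strict_mono r
                   \<and> liminf (\<lambda>n. ereal (real (count_upto (range r) n) / real n)) > 0
                   \<longrightarrow> stat_convergent (x \<circ> r)))
       \<and> (stat_convergent x
            \<longleftrightarrow> (\<forall>r. strict_mono r \<and> stat_dense (range r)
                   \<longrightarrow> stat_convergent (x \<circ> r)))"
proof -
  have id: "strict_mono (id :: nat \<Rightarrow> nat)" "stat_dense (range id)"
    by (simp_all add: strict_mono_def stat_dense_UNIV)
  then have "liminf (\<lambda>n. ereal (real (count_upto (range id) n) / real n)) > 0"
    by (simp add: liminf_count_upto_pos_if_stat_dense)
  with id show ?thesis
    using stat_convergent_subseq[of x] liminf_count_upto_pos_if_stat_dense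
    by (intro conjI iffI allI impI) (fastforce simp del: id_apply)+
qed

end
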